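(* The function $g_{np}$ is $\mathbb{S}$-nearly periodic.
   Context: For an integer $x>0$ with binary expansion $x=\sum_{j\ge0}a_j2^j$, $a_j\in\{0,1\}$, let $i_x=\min\{j: a_j=1\}$. Define $g_{np}:\mathbb{Z}_{\ge0}\to\mathbb{R}$ by $g_{np}(0)=0$ and $g_{np}(x)=2^{-i_x}$ for $x>0$. A function $f:\mathbb{R}_{\ge0}\to\mathbb{R}_{\ge0}$ is sub-polynomial if for every $\alpha>0$, $\lim_{x\to\infty}x^\alpha f(x)=\infty$ and $\lim_{x\to\infty}x^{-\alpha}f(x)=0$. For a set $\mathcal{S}$ of functions, $g$ is $\mathcal{S}$-nearly periodic if (1) there is $\alpha>0$ such that for every $N>0$ there exist $x,y\in\mathbb{N}$, $x<y$, $y\ge N$ with $g(y)\le g(x)/y^\alpha$ (such $y$ is called an $\alpha$-period of $g$); and (2) for every $\alpha>0$ and every $h\in\mathcal{S}$ there is $N_1>0$ such that for all $\alpha$-periods $y\ge N_1$ and all $x<y$ with $g(y)y^\alpha\le g(x)$, $|g(x+y)-g(x)|\le \min\{g(x),g(x+y)\}h(y)$. $\mathbb{S}$ denotes the set of non-increasing sub-polynomial functions on $\mathbb{Z}_{\ge0}$. *)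

theory Defs
  imports Complex_Main
begin

definition low_bit :: "nat \<Rightarrow> nat" where
  "low_bit x = (LEAST j. odd (x div 2 ^ j))"

definition g_np :: "nat \<Rightarrow> real" where
  "g_np x = (if x = 0 then 0 else 1 / 2 ^ low_bit x)"

definition sub_polynomial :: "(nat \<Rightarrow> real) \<Rightarrow> bool" where
  "sub_polynomial f \<longleftrightarrow> (\<forall>x. f x \<ge> 0) \<and>
     (\<forall>\<alpha>>0. filterlim (\<lambda>x. real x powr \<alpha> * f x) at_top sequentially \<and>
            ((\<lambda>x. real x powr (-\<alpha>) * f x) \<longlongrightarrow> 0) sequentially)"

definition S_set :: "(nat \<Rightarrow> real) set" where
  "S_set = {h. antimono h \<and> sub_polynomial h}"

definition is_period :: "(nat \<Rightarrow> real) \<Rightarrow> real \<Rightarrow> nat \<Rightarrow> bool" where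
  "is_period g \<alpha> y \<longleftrightarrow> (\<exists>x<y. g y \<le> g x / real y powr \<alpha>)"

definition nearly_periodic :: "(nat \<Rightarrow> real) set \<Rightarrow> (nat \<Rightarrow> real) \<Rightarrow> bool" where
  "nearly_periodic S g \<longleftrightarrow>
     (\<exists>\<alpha>>0. \<forall>N>0. \<exists>x y. x < y \<and> y \<ge> N \<and> g y \<le> g x / real y powr \<alpha>) \<and>
     (\<forall>\<alpha>>0. \<forall>h\<in>S. \<exists>N1>0. \<forall>y x. is_period g \<alpha> y \<and> y \<ge> N1 \<and> x < y \<and>
        g y * real y powr \<alpha> \<le> g x \<longrightarrow>
        \<bar>g (x + y) - g x\<bar> \<le> min (g x) (g (x + y)) * h y)"

end

theory Submission
  imports Defs "HOL-Computational_Algebra.Primes"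
begin

text \<open>Write \<open>x = 2^a m\<close> and \<open>y = 2^b n\<close> with \<open>m, n\<close> odd. The value \<open>g_np x = 2^-a\<close> only depends
  on \<open>a\<close>, and if \<open>a < b\<close> then \<open>x + y = 2^a (m + 2^(b-a) n)\<close> with an odd second factor, so
  \<open>g_np (x + y) = g_np x\<close>. Hence adding any \<open>y\<close> with \<open>g_np y < g_np x\<close> leaves \<open>g_np x\<close>
  unchanged, which gives the second condition of near periodicity with zero error; the powers
  \<open>y = 2^N\<close>, for which \<open>g_np y = g_np 1 / y\<close>, supply 1-periods beyond every bound.\<close>

lemma power_two_mult_odd_decompose:
  fixes x :: nat
  assumes "x \<noteq> 0"
  obtains k m where "odd m" "x = 2 ^ k * m"
  by (rule multiplicity_decompose'[OF assms, of 2]) (auto intro: that)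

lemma low_bit_power_two_mult_odd:
  assumes "odd m"
  shows "low_bit (2 ^ k * m) = k"
  unfolding low_bit_def
proof (rule Least_equality)
  show "odd (2 ^ k * m div 2 ^ k)"
    using assms by simp
next
  fix j assume odd_quotient: "odd (2 ^ k * m div 2 ^ j)"
  show "k \<le> j"
  proof (rule ccontr)
    assume "\<not> k \<le> j"
    then have "(2::nat) ^ k = 2 ^ j * 2 ^ (k - j)"
      by (simp flip: power_add)
    then have "2 ^ k * m div 2 ^ j = 2 ^ (k - j) * m"
      by simp
    with \<open>\<not> k \<le> j\<close> odd_quotient show False
      by simp
  qed
qed

lemma g_np_power_two_mult_odd:
  assumes "odd m"
  shows "g_np (2 ^ k * m) = 1 / 2 ^ k"
  using assms low_bit_power_two_mult_odd[OF assms] by (auto simp: g_np_def odd_pos)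

lemma g_np_power_two: "g_np (2 ^ k) = 1 / 2 ^ k"
  using g_np_power_two_mult_odd[of 1 k] by simp

lemma g_np_nonneg: "g_np x \<ge> 0"
  by (simp add: g_np_def)

lemma g_np_pos: "x \<noteq> 0 \<Longrightarrow> g_np x > 0"
  by (simp add: g_np_def)

lemma g_np_add_eq:
  assumes less: "g_np y < g_np x"
  shows "g_np (x + y) = g_np x"
proof (cases "y = 0")
  case False
  have "x \<noteq> 0"
    using less g_np_nonneg[of y] by (auto simp: g_np_def split: if_splits)
  then obtain a m where m: "odd m" "x = 2 ^ a * m"
    by (rule power_two_mult_odd_decompose)
  obtain b n where n: "odd n" "y = 2 ^ b * n"
    using False by (rule power_two_mult_odd_decompose)
  have "(1::real) / 2 ^ b < 1 / 2 ^ a"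
    using less m n by (simp add: g_np_power_two_mult_odd)
  then have "(2::real) ^ a < 2 ^ b"
    by (simp add: field_simps)
  then have "a < b"
    by simp
  then have "x + y = 2 ^ a * (m + 2 ^ (b - a) * n)"
    using m n by (simp add: algebra_simps flip: power_add)
  moreover have "odd (m + 2 ^ (b - a) * n)"
    using m \<open>a < b\<close> by simp
  ultimately show ?thesis
    using m by (simp add: g_np_power_two_mult_odd)
qed simp

theorem proposition53:
  shows "nearly_periodic S_set g_np"
  unfolding nearly_periodic_def
proof (intro conjI)
  have "g_np (2 ^ N) \<le> g_np 1 / real (2 ^ N) powr 1" for N :: nat
    using g_np_power_two[of N] g_np_power_two[of 0] by simp
  moreover have "1 < (2::nat) ^ N" "N \<le> 2 ^ N" if "N > 0" for N :: nat
    using that one_less_power[of "2::nat" N] by (simp_all add: less_imp_le)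
  ultimately show "\<exists>\<alpha>>0. \<forall>N>0. \<exists>x y. x < y \<and> y \<ge> N \<and> g_np y \<le> g_np x / real y powr \<alpha>"
    by (metis zero_less_one)
next
  show "\<forall>\<alpha>>0. \<forall>h\<in>S_set. \<exists>N1>0. \<forall>y x. is_period g_np \<alpha> y \<and> y \<ge> N1 \<and> x < y \<and>
        g_np y * real y powr \<alpha> \<le> g_np x \<longrightarrow>
        \<bar>g_np (x + y) - g_np x\<bar> \<le> min (g_np x) (g_np (x + y)) * h y"
  proof (intro allI impI ballI exI[of _ 2] conjI)
    fix \<alpha> :: real and h y x
    assume "\<alpha> > 0" and "h \<in> S_set"
      and "is_period g_np \<alpha> y \<and> 2 \<le> y \<and> x < y \<and> g_np y * real y powr \<alpha> \<le> g_np x"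
    then have "2 \<le> y" and period: "g_np y * real y powr \<alpha> \<le> g_np x"
      and "h y \<ge> 0"
      by (auto simp: S_set_def sub_polynomial_def)
    have "g_np y < g_np y * real y powr \<alpha>"
      using g_np_pos[of y] \<open>2 \<le> y\<close> \<open>\<alpha> > 0\<close> by (simp add: powr_less_mono2[of \<alpha> 1, simplified])
    then have "g_np (x + y) = g_np x"
      using period by (intro g_np_add_eq) simp
    then show "\<bar>g_np (x + y) - g_np x\<bar> \<le> min (g_np x) (g_np (x + y)) * h y"
      using g_np_nonneg[of x] \<open>h y \<ge> 0\<close> by simp
  qed simp
qed

end
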